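(* Let $G$ be a graph and let $\{H_1,\ldots,H_k\}$ be an isometric cover of $G$. Then $\mathrm{gp}(G)\le \sum_{i=1}^k \mathrm{gp}(H_i)$.
   Context: All graphs are finite, simple and connected. A subgraph $H$ of $G$ is isometric if $d_H(x,y)=d_G(x,y)$ for all $x,y\in V(H)$. A set $\{H_1,\ldots,H_k\}$ of subgraphs of $G$ is an isometric cover of $G$ if each $H_i$ is isometric in $G$ and $\bigcup_{i=1}^k V(H_i)=V(G)$. A set $S$ of vertices of a graph is a general position set if no three vertices of $S$ lie on a common geodesic (shortest path) of that graph; $\mathrm{gp}(G)$ denotes the maximum cardinality of a general position set of $G$. *)

theory Defs
  imports Main
begin

definition simple_graph :: "'a set \<Rightarrow> 'a set set \<Rightarrow> bool" where
  "simple_graph V E \<longleftrightarrow> finite V \<and> (\<forall>e\<in>E. \<exists>u v. e = {u, v} \<and> u \<noteq> v \<and> u \<in> V \<and> v \<in> V)"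

definition is_walk :: "'a set \<Rightarrow> 'a set set \<Rightarrow> 'a list \<Rightarrow> bool" where
  "is_walk V E p \<longleftrightarrow> p \<noteq> [] \<and> set p \<subseteq> V \<and> (\<forall>i. Suc i < length p \<longrightarrow> {p ! i, p ! Suc i} \<in> E)"

definition walk_between :: "'a set \<Rightarrow> 'a set set \<Rightarrow> 'a \<Rightarrow> 'a \<Rightarrow> 'a list \<Rightarrow> bool" where
  "walk_between V E x y p \<longleftrightarrow> is_walk V E p \<and> hd p = x \<and> last p = y"

definition connected_graph :: "'a set \<Rightarrow> 'a set set \<Rightarrow> bool" where
  "connected_graph V E \<longleftrightarrow> V \<noteq> {} \<and> (\<forall>x\<in>V. \<forall>y\<in>V. \<exists>p. walk_between V E x y p)"

definition gdist :: "'a set \<Rightarrow> 'a set set \<Rightarrow> 'a \<Rightarrow> 'a \<Rightarrow> nat" where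
  "gdist V E x y = (LEAST n. \<exists>p. walk_between V E x y p \<and> length p = Suc n)"

definition geodesic :: "'a set \<Rightarrow> 'a set set \<Rightarrow> 'a list \<Rightarrow> bool" where
  "geodesic V E p \<longleftrightarrow> is_walk V E p \<and> length p = Suc (gdist V E (hd p) (last p))"

definition gp_set :: "'a set \<Rightarrow> 'a set set \<Rightarrow> 'a set \<Rightarrow> bool" where
  "gp_set V E S \<longleftrightarrow> S \<subseteq> V \<and>
     (\<forall>p. geodesic V E p \<longrightarrow> \<not> (\<exists>x y z. x \<in> S \<and> y \<in> S \<and> z \<in> S \<and>
        x \<noteq> y \<and> y \<noteq> z \<and> x \<noteq> z \<and> x \<in> set p \<and> y \<in> set p \<and> z \<in> set p))"

definition gp :: "'a set \<Rightarrow> 'a set set \<Rightarrow> nat" where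
  "gp V E = Max {card S | S. gp_set V E S}"

definition subgraph :: "'a set \<Rightarrow> 'a set set \<Rightarrow> 'a set \<Rightarrow> 'a set set \<Rightarrow> bool" where
  "subgraph VH EH V E \<longleftrightarrow> VH \<subseteq> V \<and> EH \<subseteq> E \<and> simple_graph VH EH"

definition isometric_subgraph :: "'a set \<Rightarrow> 'a set set \<Rightarrow> 'a set \<Rightarrow> 'a set set \<Rightarrow> bool" where
  "isometric_subgraph VH EH V E \<longleftrightarrow> subgraph VH EH V E \<and> connected_graph VH EH \<and>
     (\<forall>x\<in>VH. \<forall>y\<in>VH. gdist VH EH x y = gdist V E x y)"

end

theory Submission
  imports Defs
begin

(* A geodesic of an isometric subgraph H is a geodesic of G, so a general position set of G
   meets V(H) in a general position set of H. Covering a maximum general position set S of G by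
   the sets S \<inter> V(H_i) gives |S| \<le> \<Sum> |S \<inter> V(H_i)| \<le> \<Sum> gp(H_i). *)

lemma finite_gp_set_cards:
  assumes "finite V"
  shows "finite {card S | S. gp_set V E S}"
proof -
  have "{card S | S. gp_set V E S} \<subseteq> {0..card V}"
    using assms by (auto simp: gp_set_def intro: card_mono)
  then show ?thesis using finite_subset by blast
qed

lemma card_le_gp:
  assumes "finite V" "gp_set V E S"
  shows "card S \<le> gp V E"
  unfolding gp_def using finite_gp_set_cards[OF assms(1), of E] assms(2) by (auto intro: Max_ge)

lemma gp_set_card_eq_gp_exists:
  assumes "finite V"
  obtains S where "gp_set V E S" "card S = gp V E"
proof -
  have "gp_set V E {}" by (simp add: gp_set_def)
  then have "{card S | S. gp_set V E S} \<noteq> {}" by blast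
  then have "gp V E \<in> {card S | S. gp_set V E S}"
    unfolding gp_def using Max_in[OF finite_gp_set_cards[OF assms]] by simp
  then show ?thesis using that by auto
qed

lemma geodesic_isometric_subgraph:
  assumes iso: "isometric_subgraph VH EH V E" and g: "geodesic VH EH p"
  shows "geodesic V E p"
proof -
  have sub: "VH \<subseteq> V" "EH \<subseteq> E"
    using iso by (auto simp: isometric_subgraph_def subgraph_def)
  have w: "is_walk VH EH p" and len: "length p = Suc (gdist VH EH (hd p) (last p))"
    using g by (auto simp: geodesic_def)
  have "p \<noteq> []" "set p \<subseteq> VH" using w by (auto simp: is_walk_def)
  then have "hd p \<in> VH" "last p \<in> VH" by auto
  then have "gdist VH EH (hd p) (last p) = gdist V E (hd p) (last p)"
    using iso by (auto simp: isometric_subgraph_def)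
  moreover have "is_walk V E p" using w sub by (auto simp: is_walk_def)
  ultimately show ?thesis using len by (simp add: geodesic_def)
qed

lemma gp_set_inter_isometric_subgraph:
  assumes iso: "isometric_subgraph VH EH V E" and S: "gp_set V E S"
  shows "gp_set VH EH (S \<inter> VH)"
  using S geodesic_isometric_subgraph[OF iso] unfolding gp_set_def by blast

lemma card_inter_le_gp_isometric_subgraph:
  assumes iso: "isometric_subgraph VH EH V E" and S: "gp_set V E S"
  shows "card (S \<inter> VH) \<le> gp VH EH"
proof -
  have "finite VH"
    using iso by (simp add: isometric_subgraph_def subgraph_def simple_graph_def)
  then show ?thesis using card_le_gp gp_set_inter_isometric_subgraph[OF iso S] by blast
qed

theorem theorem3p1:
  fixes V :: "'a set" and E :: "'a set set"
    and k :: nat and HV :: "nat \<Rightarrow> 'a set" and HE :: "nat \<Rightarrow> 'a set set"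
  assumes "simple_graph V E" and "connected_graph V E"
    and "\<And>i. i \<in> {1..k} \<Longrightarrow> isometric_subgraph (HV i) (HE i) V E"
    and "(\<Union>i\<in>{1..k}. HV i) = V"
  shows "gp V E \<le> (\<Sum>i=1..k. gp (HV i) (HE i))"
proof -
  have "finite V" using assms(1) by (simp add: simple_graph_def)
  then obtain S where S: "gp_set V E S" "card S = gp V E"
    by (rule gp_set_card_eq_gp_exists)
  have "S \<subseteq> V" using S(1) by (simp add: gp_set_def)
  then have "S = (\<Union>i\<in>{1..k}. S \<inter> HV i)" using assms(4) by blast
  then have "card S \<le> (\<Sum>i=1..k. card (S \<inter> HV i))"
    by (metis card_UN_le finite_atLeastAtMost)
  also have "\<dots> \<le> (\<Sum>i=1..k. gp (HV i) (HE i))"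
    using card_inter_le_gp_isometric_subgraph[OF assms(3) S(1)] by (rule sum_mono)
  finally show ?thesis using S(2) by simp
qed

end
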